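(* Let $T$ be an MFQST with degree bound $\phi\ge3$. Then every Steiner point $s$ of $T$ satisfies $\phi\le\deg s\le 2\phi-3$.
   Context: Let $Z=\{z_1,\dots,z_n\}\subset\mathbb{R}^2$ ($n\ge 1$) be a set of sources and $z_{BS}\in\mathbb{R}^2\setminus Z$ a sink; each source has supply $1$. A flow-dependent quadratic Steiner tree (FQST) consists of a finite set $S\subset\mathbb{R}^2$ of Steiner points and a tree $T$ with vertex set $Z\cup S\cup\{z_{BS}\}$ whose edges are directed towards $z_{BS}$. Every node other than the sink has exactly one out-edge, and the sink has none. Each edge $e$ carries a positive flow $f(e)$ such that: - at each source, the flow on its out-edge minus the total flow on its in-edges equals $1$; - at each Steiner point, the out-flow equals the total in-flow; - the sink receives total flow $n$. The cost is $L(T)=\sum_{e\in E(T)} f(e)|e|^2$. An MFQST with degree bound $\phi$ is an FQST minimising $L$ among all FQSTs (any finite $S$, any topology) in which every Steiner point has degree at least $\phi$. *)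

theory Defs
  imports "HOL-Analysis.Analysis"
begin

type_synonym pt = "real^2"

text \<open>An FQST for sources Z and sink zb: Steiner point set S, tree given by the
parent map p (the unique out-edge of v \<in> Z \<union> S is (v, p v)), and flow f v on the
out-edge of v.\<close>

definition in_nodes :: "pt set \<Rightarrow> pt set \<Rightarrow> (pt \<Rightarrow> pt) \<Rightarrow> pt \<Rightarrow> pt set" where
  "in_nodes Z S p x = {u \<in> Z \<union> S. p u = x}"

definition is_fqst :: "pt set \<Rightarrow> pt \<Rightarrow> pt set \<Rightarrow> (pt \<Rightarrow> pt) \<Rightarrow> (pt \<Rightarrow> real) \<Rightarrow> bool" where
  "is_fqst Z zb S p f \<longleftrightarrow>
     finite Z \<and> Z \<noteq> {} \<and> zb \<notin> Z \<and> finite S \<and> S \<inter> Z = {} \<and> zb \<notin> S \<and>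
     (\<forall>v \<in> Z \<union> S. p v \<in> Z \<union> S \<union> {zb} \<and> f v > 0) \<and>
     (\<forall>v \<in> Z \<union> S. \<exists>k. (p ^^ k) v = zb) \<and>
     (\<forall>z \<in> Z. f z - (\<Sum>u \<in> in_nodes Z S p z. f u) = 1) \<and>
     (\<forall>s \<in> S. f s = (\<Sum>u \<in> in_nodes Z S p s. f u)) \<and>
     (\<Sum>u \<in> in_nodes Z S p zb. f u) = real (card Z)"

text \<open>Degree of a Steiner point: in-edges plus its single out-edge.\<close>
definition steiner_deg :: "pt set \<Rightarrow> pt set \<Rightarrow> (pt \<Rightarrow> pt) \<Rightarrow> pt \<Rightarrow> nat" where
  "steiner_deg Z S p s = card (in_nodes Z S p s) + 1"

definition fqst_cost :: "pt set \<Rightarrow> pt set \<Rightarrow> (pt \<Rightarrow> pt) \<Rightarrow> (pt \<Rightarrow> real) \<Rightarrow> real" where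
  "fqst_cost Z S p f = (\<Sum>v \<in> Z \<union> S. f v * (norm (v - p v))\<^sup>2)"

definition fqst_deg_bound :: "pt set \<Rightarrow> pt \<Rightarrow> nat \<Rightarrow> pt set \<Rightarrow> (pt \<Rightarrow> pt) \<Rightarrow> (pt \<Rightarrow> real) \<Rightarrow> bool" where
  "fqst_deg_bound Z zb \<phi> S p f \<longleftrightarrow> is_fqst Z zb S p f \<and> (\<forall>s \<in> S. steiner_deg Z S p s \<ge> \<phi>)"

definition is_mfqst :: "pt set \<Rightarrow> pt \<Rightarrow> nat \<Rightarrow> pt set \<Rightarrow> (pt \<Rightarrow> pt) \<Rightarrow> (pt \<Rightarrow> real) \<Rightarrow> bool" where
  "is_mfqst Z zb \<phi> S p f \<longleftrightarrow> fqst_deg_bound Z zb \<phi> S p f \<and>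
     (\<forall>S' p' f'. fqst_deg_bound Z zb \<phi> S' p' f' \<longrightarrow> fqst_cost Z S p f \<le> fqst_cost Z S' p' f')"

end

theory Submission
  imports Defs
begin

(*
  The lower bound phi <= deg s is part of the feasibility condition.  For the
  upper bound suppose a Steiner point s has in-degree at least 2 phi - 3.  Among
  its in-neighbours u (all different from s, with positive flow) we find a set C
  of phi - 1 of them whose weighted pull  g = sum_{u in C} f u (s - u)  is
  non-zero.  Splitting s, we reroute C to a fresh Steiner point s' = s - t g
  which itself is a child of s and carries the flow sum f C.  Both s and s' keep
  degree >= phi, the result is again an FQST, and for small t > 0 its cost is
  strictly smaller, contradicting minimality.
*)

text \<open>Among at least k+1 non-zero vectors one finds k of them with non-zero sum:
  otherwise every vector of a (k+1)-subset equals the total of that subset,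
  forcing the total, hence every vector, to vanish.\<close>
lemma nonzero_subset_sum:
  fixes h :: "'a \<Rightarrow> 'b::real_vector"
  assumes "finite I" "k < card I" "0 < k" "\<forall>u\<in>I. h u \<noteq> 0"
  shows "\<exists>C\<subseteq>I. card C = k \<and> sum h C \<noteq> 0"
proof (rule ccontr)
  assume no_subset: "\<not> ?thesis"
  obtain D where D: "D \<subseteq> I" "card D = Suc k"
    using obtain_subset_with_card_n[of "Suc k" I] assms(2) by auto
  have finD: "finite D" using D(1) assms(1) finite_subset by blast
  have each_is_total: "h u = sum h D" if "u \<in> D" for u
  proof -
    have "card (D - {u}) = k" using D(2) finD that by simp
    then have "sum h (D - {u}) = 0" using no_subset D(1) by blast
    then show ?thesis using sum.remove[OF finD that, of h] by simp
  qed
  have "sum h D = (\<Sum>_\<in>D. sum h D)" using each_is_total by (rule sum.cong[OF refl])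
  also have "\<dots> = real (Suc k) *\<^sub>R sum h D" using D(2) by (simp add: sum_constant_scaleR)
  finally have "real k *\<^sub>R sum h D = 0" by (simp add: algebra_simps)
  then have total_zero: "sum h D = 0" using assms(3) by simp
  obtain u where "u \<in> D" using D(2) by (metis card.empty ex_in_conv nat.distinct(1))
  then show False using each_is_total total_zero D(1) assms(4) by auto
qed

lemma reaches_after_detours:
  assumes closed: "\<forall>v\<in>A. p v \<in> A \<union> {r}"
    and detour: "\<forall>v\<in>A. p' v = p v \<or> p' (p' v) = p v"
  shows "(p ^^ k) v = r \<Longrightarrow> v \<in> A \<union> {r} \<Longrightarrow> \<exists>k'. (p' ^^ k') v = r"
proof (induction k arbitrary: v)
  case 0
  then show ?case by (metis funpow_0)
next
  case (Suc k)
  show ?case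
  proof (cases "v = r")
    case True
    then show ?thesis by (metis funpow_0)
  next
    case False
    then have vA: "v \<in> A" using Suc.prems(2) by auto
    have "(p ^^ k) (p v) = r" using Suc.prems(1) by (simp add: funpow_Suc_right del: funpow.simps)
    then obtain k' where k': "(p' ^^ k') (p v) = r" using Suc.IH closed vA by blast
    from detour vA consider "p' v = p v" | "p' (p' v) = p v" by blast
    then show ?thesis
    proof cases
      case 1
      then have "(p' ^^ Suc k') v = r" using k' by (simp add: funpow_Suc_right del: funpow.simps)
      then show ?thesis by blast
    next
      case 2
      then have "(p' ^^ Suc (Suc k')) v = r" using k' by (simp add: funpow_Suc_right del: funpow.simps)
      then show ?thesis by blast
    qed
  qed
qed

text \<open>Moving a centre c by a small step against g = sum w v (c - v) and joining
  the old centre to the new one by an edge of weight sum w C strictly decreases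
  the weighted quadratic cost: the change is 2 t |g|^2 (t sum w C - 1).\<close>
lemma shifted_centre_cost_decrease:
  fixes C :: "'a::real_inner set" and w :: "'a \<Rightarrow> real" and c :: 'a
  defines "g \<equiv> \<Sum>v\<in>C. w v *\<^sub>R (c - v)"
  assumes "g \<noteq> 0" "0 < t" "t * sum w C < 1"
  shows "sum w C * (norm ((c - t *\<^sub>R g) - c))\<^sup>2 + (\<Sum>v\<in>C. w v * (norm (v - (c - t *\<^sub>R g)))\<^sup>2)
           < (\<Sum>v\<in>C. w v * (norm (v - c))\<^sup>2)"
proof -
  have expand: "(norm (v - (c - t *\<^sub>R g)))\<^sup>2 = (norm (v - c))\<^sup>2 - 2 * t * ((c - v) \<bullet> g) + t\<^sup>2 * (g \<bullet> g)"
    for v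
  proof -
    have "v - (c - t *\<^sub>R g) = (v - c) + t *\<^sub>R g" by (simp add: algebra_simps)
    then have "(norm (v - (c - t *\<^sub>R g)))\<^sup>2 = ((v - c) + t *\<^sub>R g) \<bullet> ((v - c) + t *\<^sub>R g)"
      by (simp only: power2_norm_eq_inner)
    also have "\<dots> = (v - c) \<bullet> (v - c) + 2 * t * ((v - c) \<bullet> g) + t\<^sup>2 * (g \<bullet> g)"
      by (simp add: inner_add_left inner_add_right inner_commute power2_eq_square algebra_simps)
    also have "(v - c) \<bullet> (v - c) = (norm (v - c))\<^sup>2" by (simp only: power2_norm_eq_inner)
    also have "(v - c) \<bullet> g = - ((c - v) \<bullet> g)" by (simp add: inner_diff_left)
    finally show ?thesis by simp
  qed
  have pull: "(\<Sum>v\<in>C. w v * ((c - v) \<bullet> g)) = g \<bullet> g"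
    by (simp add: g_def inner_sum_left)
  have "(\<Sum>v\<in>C. w v * (norm (v - (c - t *\<^sub>R g)))\<^sup>2)
        = (\<Sum>v\<in>C. w v * (norm (v - c))\<^sup>2 - 2 * t * (w v * ((c - v) \<bullet> g)) + t\<^sup>2 * (g \<bullet> g) * w v)"
    unfolding expand by (intro sum.cong refl) (simp add: algebra_simps)
  also have "\<dots> = (\<Sum>v\<in>C. w v * (norm (v - c))\<^sup>2) - 2 * t * (g \<bullet> g) + t\<^sup>2 * (g \<bullet> g) * sum w C"
    unfolding sum.distrib sum_subtractf sum_distrib_left[symmetric] pull ..
  finally have "(\<Sum>v\<in>C. w v * (norm (v - (c - t *\<^sub>R g)))\<^sup>2)
        = (\<Sum>v\<in>C. w v * (norm (v - c))\<^sup>2) - 2 * t * (g \<bullet> g) + t\<^sup>2 * sum w C * (g \<bullet> g)"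
    by simp
  moreover have "(norm ((c - t *\<^sub>R g) - c))\<^sup>2 = t\<^sup>2 * (g \<bullet> g)"
    by (simp add: power_mult_distrib power2_norm_eq_inner)
  moreover have "2 * t * (g \<bullet> g) * (t * sum w C - 1) < 0"
    using assms(2-4) by (simp add: mult_pos_neg)
  ultimately show ?thesis by (simp add: power2_eq_square algebra_simps)
qed

lemma fresh_point_on_ray:
  fixes c g :: "'a::real_vector"
  assumes "finite B" "g \<noteq> 0" "0 < a"
  shows "\<exists>t. 0 < t \<and> t < a \<and> c - t *\<^sub>R g \<notin> B"
proof -
  have "inj (\<lambda>t::real. c - t *\<^sub>R g)" by (rule injI) (use assms(2) in simp)
  then have "finite ((\<lambda>t. c - t *\<^sub>R g) -` B)" by (rule finite_vimageI[OF assms(1)])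
  then have "infinite ({0<..<a} - (\<lambda>t. c - t *\<^sub>R g) -` B)"
    by (rule Diff_infinite_finite) (use assms(3) in simp)
  then obtain t where "t \<in> {0<..<a} - (\<lambda>t. c - t *\<^sub>R g) -` B"
    using infinite_imp_nonempty by blast
  then show ?thesis by auto
qed

text \<open>Since every vertex reaches the sink, no vertex is its own parent.\<close>
lemma fqst_no_self_loop:
  assumes "is_fqst Z zb S p f" "v \<in> Z \<union> S"
  shows "p v \<noteq> v"
proof
  assume fixed: "p v = v"
  have "(p ^^ k) v = v" for k by (induction k) (simp_all add: fixed)
  moreover obtain k where "(p ^^ k) v = zb" using assms unfolding is_fqst_def by blast
  ultimately show False using assms unfolding is_fqst_def by auto
qed

lemma fqst_in_edge_pull_nonzero:
  assumes "is_fqst Z zb S p f" "u \<in> in_nodes Z S p x"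
  shows "f u *\<^sub>R (x - u) \<noteq> 0"
proof -
  have u: "u \<in> Z \<union> S" "p u = x" using assms(2) unfolding in_nodes_def by auto
  then have "u \<noteq> x" using fqst_no_self_loop[OF assms(1) u(1)] by auto
  moreover have "f u > 0" using assms(1) u(1) unfolding is_fqst_def by auto
  ultimately show ?thesis by simp
qed

lemma fqst_finite_in_nodes:
  assumes "is_fqst Z zb S p f"
  shows "finite (in_nodes Z S p x)"
  using assms unfolding is_fqst_def in_nodes_def by auto

lemma fqst_inflow_pos:
  assumes "is_fqst Z zb S p f" "C \<subseteq> in_nodes Z S p x" "C \<noteq> {}"
  shows "0 < sum f C"
proof (rule sum_pos)
  show "finite C" using fqst_finite_in_nodes[OF assms(1)] assms(2) finite_subset by blast
  show "0 < f u" if "u \<in> C" for u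
    using assms(1,2) that unfolding is_fqst_def in_nodes_def by auto
qed (fact assms(3))

section \<open>Splitting a Steiner point\<close>

text \<open>The set C of in-neighbours of the Steiner point s is rerouted to a fresh
  Steiner point s', which becomes a child of s carrying the flow of C.\<close>
locale fqst_split =
  fixes Z :: "pt set" and zb :: pt and S :: "pt set" and p :: "pt \<Rightarrow> pt"
    and f :: "pt \<Rightarrow> real" and s :: pt and C :: "pt set" and s' :: pt
  assumes fqst: "is_fqst Z zb S p f"
    and s_in_S: "s \<in> S"
    and C_in: "C \<subseteq> in_nodes Z S p s"
    and C_ne: "C \<noteq> {}"
    and s'_fresh: "s' \<notin> Z \<union> S \<union> {zb}"
begin

definition split_parent :: "pt \<Rightarrow> pt" where
  "split_parent x = (if x \<in> C then s' else if x = s' then s else p x)"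

definition split_flow :: "pt \<Rightarrow> real" where
  "split_flow = f(s' := sum f C)"

abbreviation split_steiner :: "pt set" where
  "split_steiner \<equiv> insert s' S"

lemma fqst_facts:
  "finite Z" "Z \<noteq> {}" "zb \<notin> Z" "finite S" "S \<inter> Z = {}" "zb \<notin> S"
  "\<forall>v\<in>Z \<union> S. p v \<in> Z \<union> S \<union> {zb} \<and> f v > 0"
  "\<forall>v\<in>Z \<union> S. \<exists>k. (p ^^ k) v = zb"
  "\<forall>z\<in>Z. f z - (\<Sum>u \<in> in_nodes Z S p z. f u) = 1"
  "\<forall>x\<in>S. f x = (\<Sum>u \<in> in_nodes Z S p x. f u)"
  "(\<Sum>u \<in> in_nodes Z S p zb. f u) = real (card Z)"
  using fqst unfolding is_fqst_def by auto

lemma C_facts: "finite C" "C \<subseteq> Z \<union> S" "\<And>u. u \<in> C \<Longrightarrow> p u = s" "s \<notin> C"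
proof -
  show CA: "C \<subseteq> Z \<union> S" and "\<And>u. u \<in> C \<Longrightarrow> p u = s"
    using C_in unfolding in_nodes_def by auto
  then show "finite C" using fqst_facts(1,4) finite_subset by blast
  show "s \<notin> C" using fqst_no_self_loop[OF fqst] CA \<open>\<And>u. u \<in> C \<Longrightarrow> p u = s\<close> by blast
qed

lemma s'_facts: "s' \<notin> Z" "s' \<notin> S" "s' \<noteq> zb" "s' \<notin> C" "s' \<noteq> s"
  "\<And>v. v \<in> Z \<union> S \<Longrightarrow> p v \<noteq> s'" "\<And>x. s' \<notin> in_nodes Z S p x"
  using s'_fresh C_facts(2) s_in_S fqst_facts(7) unfolding in_nodes_def by auto

lemma split_parent_simps:
  "\<And>u. u \<in> C \<Longrightarrow> split_parent u = s'"
  "split_parent s' = s"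
  "\<And>u. u \<notin> C \<Longrightarrow> u \<noteq> s' \<Longrightarrow> split_parent u = p u"
  unfolding split_parent_def using s'_facts(4) by auto

lemma split_flow_simps: "split_flow s' = sum f C" "\<And>u. u \<noteq> s' \<Longrightarrow> split_flow u = f u"
  unfolding split_flow_def by auto

lemma in_nodes_split_new: "in_nodes Z split_steiner split_parent s' = C"
  unfolding in_nodes_def split_parent_def using C_facts(2) s'_facts(1,2,4,5,6) by auto

lemma in_nodes_split_old:
  "in_nodes Z split_steiner split_parent s = insert s' (in_nodes Z S p s - C)"
  unfolding in_nodes_def split_parent_def using C_facts(2,3) s'_facts(1,2,4,5) by auto

lemma in_nodes_split_other:
  assumes "x \<noteq> s" "x \<noteq> s'"
  shows "in_nodes Z split_steiner split_parent x = in_nodes Z S p x"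
  unfolding in_nodes_def split_parent_def using assms C_facts(3) s'_facts(1,2,5) by auto

lemma inflow_split_other:
  assumes "x \<noteq> s" "x \<noteq> s'"
  shows "(\<Sum>u \<in> in_nodes Z split_steiner split_parent x. split_flow u) = (\<Sum>u \<in> in_nodes Z S p x. f u)"
  unfolding in_nodes_split_other[OF assms] using s'_facts(7)[of x]
  by (intro sum.cong refl) (metis split_flow_simps(2))

lemma inflow_split_new: "(\<Sum>u \<in> in_nodes Z split_steiner split_parent s'. split_flow u) = split_flow s'"
  unfolding in_nodes_split_new split_flow_simps(1)
  using s'_facts(4) split_flow_simps(2) by (intro sum.cong refl) metis

text \<open>s still passes on its old flow: the flow of C now arrives via s'.\<close>
lemma inflow_split_old: "(\<Sum>u \<in> in_nodes Z split_steiner split_parent s. split_flow u) = split_flow s"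
proof -
  let ?I = "in_nodes Z S p s"
  have finI: "finite ?I" by (rule fqst_finite_in_nodes[OF fqst])
  have "(\<Sum>u \<in> insert s' (?I - C). split_flow u) = split_flow s' + (\<Sum>u \<in> ?I - C. split_flow u)"
    using finI s'_facts(7) by simp
  also have "(\<Sum>u \<in> ?I - C. split_flow u) = (\<Sum>u \<in> ?I - C. f u)"
    using s'_facts(7)[of s] split_flow_simps(2) by (intro sum.cong refl) (metis DiffD1)
  also have "split_flow s' + \<dots> = sum f ?I"
    using sum.subset_diff[OF C_in finI, of f] split_flow_simps(1) by simp
  also have "\<dots> = split_flow s" using fqst_facts(10) s_in_S s'_facts(5) split_flow_simps(2) by auto
  finally show ?thesis unfolding in_nodes_split_old .
qed

text \<open>Every step of the old tree is reproduced directly or via s', so every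
  vertex of the split tree still reaches the sink.\<close>
lemma split_reaches_sink: "\<forall>v\<in>Z \<union> split_steiner. \<exists>k. (split_parent ^^ k) v = zb"
proof
  fix v assume v: "v \<in> Z \<union> split_steiner"
  have detour: "\<forall>u\<in>Z \<union> S. split_parent u = p u \<or> split_parent (split_parent u) = p u"
  proof
    fix u assume u: "u \<in> Z \<union> S"
    show "split_parent u = p u \<or> split_parent (split_parent u) = p u"
    proof (cases "u \<in> C")
      case True
      then show ?thesis using split_parent_simps(1,2) C_facts(3) by simp
    next
      case False
      then show ?thesis using split_parent_simps(3) u s'_facts(1,2) by auto
    qed
  qed
  have closed: "\<forall>u\<in>Z \<union> S. p u \<in> Z \<union> S \<union> {zb}" using fqst_facts(7) by simp
  have reach: "\<exists>k'. (split_parent ^^ k') u = zb" if "u \<in> Z \<union> S" for u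
  proof -
    from fqst_facts(8) that obtain k where "(p ^^ k) u = zb" by auto
    from reaches_after_detours[OF closed detour this] show ?thesis using that by simp
  qed
  show "\<exists>k. (split_parent ^^ k) v = zb"
  proof (cases "v = s'")
    case True
    obtain k where "(split_parent ^^ k) s = zb" using reach s_in_S by blast
    then have "(split_parent ^^ Suc k) v = zb"
      using True split_parent_simps(2) by (simp add: funpow_Suc_right del: funpow.simps)
    then show ?thesis by blast
  next
    case False
    then show ?thesis using v reach by blast
  qed
qed

lemma split_is_fqst: "is_fqst Z zb split_steiner split_parent split_flow"
  unfolding is_fqst_def
proof (intro conjI)
  show "finite Z" "Z \<noteq> {}" "zb \<notin> Z" using fqst_facts by auto
  show "finite split_steiner" "split_steiner \<inter> Z = {}" "zb \<notin> split_steiner"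
    using fqst_facts s'_facts by auto
  have "sum f C > 0" by (rule fqst_inflow_pos[OF fqst C_in C_ne])
  then show "\<forall>v\<in>Z \<union> split_steiner. split_parent v \<in> Z \<union> split_steiner \<union> {zb} \<and> 0 < split_flow v"
    using fqst_facts(7) s_in_S split_parent_simps split_flow_simps by (metis Un_iff insert_iff)
  show "\<forall>v\<in>Z \<union> split_steiner. \<exists>k. (split_parent ^^ k) v = zb" by (rule split_reaches_sink)
  show "\<forall>z\<in>Z. split_flow z - (\<Sum>u \<in> in_nodes Z split_steiner split_parent z. split_flow u) = 1"
    using fqst_facts(5,9) s_in_S s'_facts(1) inflow_split_other split_flow_simps(2) by fastforce
  show "\<forall>x\<in>split_steiner. split_flow x = (\<Sum>u \<in> in_nodes Z split_steiner split_parent x. split_flow u)"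
    using fqst_facts(10) inflow_split_new inflow_split_old inflow_split_other split_flow_simps(2)
    by (metis insert_iff)
  show "(\<Sum>u \<in> in_nodes Z split_steiner split_parent zb. split_flow u) = real (card Z)"
    using fqst_facts(6,11) s_in_S s'_facts(3) inflow_split_other by metis
qed

text \<open>s' gets degree |C| + 1 and s degree deg s - |C| + 1; all other degrees
  are unchanged.\<close>
lemma split_degree_bound:
  assumes "\<forall>x\<in>S. \<phi> \<le> steiner_deg Z S p x"
    and "\<phi> \<le> card C + 1" and "\<phi> + card C \<le> card (in_nodes Z S p s) + 2"
  shows "\<forall>x\<in>split_steiner. \<phi> \<le> steiner_deg Z split_steiner split_parent x"
proof
  fix x assume x: "x \<in> split_steiner"
  let ?I = "in_nodes Z S p s"
  have finI: "finite ?I" by (rule fqst_finite_in_nodes[OF fqst])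
  have "card (in_nodes Z split_steiner split_parent s) = card ?I - card C + 1"
    unfolding in_nodes_split_old using finI s'_facts(7) card_Diff_subset[OF C_facts(1) C_in]
    by (simp add: card_insert_if)
  moreover have "card C \<le> card ?I" using card_mono[OF finI C_in] .
  ultimately have "\<phi> \<le> steiner_deg Z split_steiner split_parent s"
    using assms(3) unfolding steiner_deg_def by linarith
  then show "\<phi> \<le> steiner_deg Z split_steiner split_parent x"
    using x assms(1,2) in_nodes_split_new in_nodes_split_other unfolding steiner_deg_def
    by (cases "x = s'"; cases "x = s") auto
qed

lemma split_cost:
  "fqst_cost Z split_steiner split_parent split_flow =
     fqst_cost Z S p f + (sum f C * (norm (s' - s))\<^sup>2 + (\<Sum>v\<in>C. f v * (norm (v - s'))\<^sup>2))
       - (\<Sum>v\<in>C. f v * (norm (v - s))\<^sup>2)"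
proof -
  have finA: "finite (Z \<union> S)" using fqst_facts(1,4) by simp
  define R where "R = (\<Sum>v \<in> (Z \<union> S) - C. f v * (norm (v - p v))\<^sup>2)"
  have "fqst_cost Z S p f = R + (\<Sum>v\<in>C. f v * (norm (v - p v))\<^sup>2)"
    unfolding fqst_cost_def R_def using sum.subset_diff[OF C_facts(2) finA] by simp
  also have "(\<Sum>v\<in>C. f v * (norm (v - p v))\<^sup>2) = (\<Sum>v\<in>C. f v * (norm (v - s))\<^sup>2)"
    using C_facts(3) by simp
  finally have old: "fqst_cost Z S p f = R + (\<Sum>v\<in>C. f v * (norm (v - s))\<^sup>2)" .
  have "Z \<union> split_steiner = insert s' (Z \<union> S)" by auto
  then have "fqst_cost Z split_steiner split_parent split_flow
      = sum f C * (norm (s' - s))\<^sup>2 + (\<Sum>v \<in> Z \<union> S. split_flow v * (norm (v - split_parent v))\<^sup>2)"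
    unfolding fqst_cost_def using finA s'_facts split_parent_simps(2) split_flow_simps(1) by simp
  also have "(\<Sum>v \<in> Z \<union> S. split_flow v * (norm (v - split_parent v))\<^sup>2)
      = (\<Sum>v \<in> (Z \<union> S) - C. split_flow v * (norm (v - split_parent v))\<^sup>2)
        + (\<Sum>v\<in>C. split_flow v * (norm (v - split_parent v))\<^sup>2)"
    using sum.subset_diff[OF C_facts(2) finA] by simp
  also have "(\<Sum>v \<in> (Z \<union> S) - C. split_flow v * (norm (v - split_parent v))\<^sup>2) = R"
    unfolding R_def
  proof (intro sum.cong refl)
    fix x assume x: "x \<in> Z \<union> S - C"
    then have "x \<noteq> s'" using s'_facts by auto
    then show "split_flow x * (norm (x - split_parent x))\<^sup>2 = f x * (norm (x - p x))\<^sup>2"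
      using x split_parent_simps(3) split_flow_simps(2) by simp
  qed
  also have "(\<Sum>v\<in>C. split_flow v * (norm (v - split_parent v))\<^sup>2) = (\<Sum>v\<in>C. f v * (norm (v - s'))\<^sup>2)"
    using s'_facts(4) split_parent_simps(1) split_flow_simps(2) by (intro sum.cong refl) metis
  finally show ?thesis unfolding old by simp
qed

lemma split_cost_decrease:
  assumes "s' = s - t *\<^sub>R (\<Sum>u\<in>C. f u *\<^sub>R (s - u))"
    and "(\<Sum>u\<in>C. f u *\<^sub>R (s - u)) \<noteq> 0" "0 < t" "t * sum f C < 1"
  shows "fqst_cost Z split_steiner split_parent split_flow < fqst_cost Z S p f"
  using shifted_centre_cost_decrease[OF assms(2-4), folded assms(1)] split_cost by linarith

end

text \<open>In an MFQST, every admissible split is balanced: if rerouting C to a new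
  Steiner point would keep all degrees at least phi, then s is the flow-weighted
  mean of C, since otherwise the split would be a strictly cheaper competitor.\<close>
lemma mfqst_admissible_split_balanced:
  assumes "is_mfqst Z zb \<phi> S p f" "s \<in> S" "C \<subseteq> in_nodes Z S p s" "C \<noteq> {}"
    and "\<phi> \<le> card C + 1" "\<phi> + card C \<le> card (in_nodes Z S p s) + 2"
  shows "(\<Sum>u\<in>C. f u *\<^sub>R (s - u)) = 0"
proof (rule ccontr)
  define g where "g = (\<Sum>u\<in>C. f u *\<^sub>R (s - u))"
  assume "g \<noteq> 0"
  have fqst: "is_fqst Z zb S p f" and degS: "\<forall>x\<in>S. \<phi> \<le> steiner_deg Z S p x"
    and optimal: "\<And>S' p' f'. fqst_deg_bound Z zb \<phi> S' p' f' \<Longrightarrow> fqst_cost Z S p f \<le> fqst_cost Z S' p' f'"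
    using assms(1) unfolding is_mfqst_def fqst_deg_bound_def by auto
  have Cpos: "0 < sum f C" by (rule fqst_inflow_pos[OF fqst assms(3,4)])
  have finB: "finite (Z \<union> S \<union> {zb})" using fqst unfolding is_fqst_def by simp
  have "0 < 1 / sum f C" using Cpos by simp
  from fresh_point_on_ray[OF finB \<open>g \<noteq> 0\<close> this, of s]
  obtain t where t: "0 < t" "t < 1 / sum f C" "s - t *\<^sub>R g \<notin> Z \<union> S \<union> {zb}"
    by blast
  interpret fqst_split Z zb S p f s C "s - t *\<^sub>R g"
    using fqst assms(2-4) t(3) by unfold_locales
  have "fqst_deg_bound Z zb \<phi> split_steiner split_parent split_flow"
    unfolding fqst_deg_bound_def using split_is_fqst split_degree_bound[OF degS assms(5,6)] by simp
  moreover have "t * sum f C < 1" using t(2) Cpos by (simp add: field_simps)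
  then have "fqst_cost Z split_steiner split_parent split_flow < fqst_cost Z S p f"
    using split_cost_decrease[OF _ _ t(1)] \<open>g \<noteq> 0\<close> unfolding g_def by blast
  ultimately show False using optimal by fastforce
qed

text \<open>The lower bound is feasibility.  For the upper bound, an in-degree of at
  least 2 phi - 3 would provide phi - 1 in-neighbours with non-zero pull, i.e. an
  unbalanced admissible split.\<close>
theorem mainTheorem7:
  fixes Z :: "pt set" and zb :: pt and \<phi> :: nat and S :: "pt set"
    and p :: "pt \<Rightarrow> pt" and f :: "pt \<Rightarrow> real" and s :: pt
  assumes "is_mfqst Z zb \<phi> S p f" and "\<phi> \<ge> 3" and "s \<in> S"
  shows "\<phi> \<le> steiner_deg Z S p s \<and> steiner_deg Z S p s \<le> 2 * \<phi> - 3"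
proof -
  have fqst: "is_fqst Z zb S p f" and degS: "\<forall>x\<in>S. \<phi> \<le> steiner_deg Z S p x"
    using assms(1) unfolding is_mfqst_def fqst_deg_bound_def by auto
  have "steiner_deg Z S p s \<le> 2 * \<phi> - 3"
  proof (rule ccontr)
    assume "\<not> steiner_deg Z S p s \<le> 2 * \<phi> - 3"
    then have cardI: "2 * \<phi> - 3 \<le> card (in_nodes Z S p s)" unfolding steiner_deg_def by linarith
    have pulls: "\<forall>u\<in>in_nodes Z S p s. f u *\<^sub>R (s - u) \<noteq> 0"
      using fqst_in_edge_pull_nonzero[OF fqst] by blast
    have "\<phi> - 1 < card (in_nodes Z S p s)" "0 < \<phi> - 1" using cardI assms(2) by auto
    from nonzero_subset_sum[OF fqst_finite_in_nodes[OF fqst] this pulls]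
    obtain C where C: "C \<subseteq> in_nodes Z S p s" "card C = \<phi> - 1" "(\<Sum>u\<in>C. f u *\<^sub>R (s - u)) \<noteq> 0"
      by blast
    moreover have "C \<noteq> {}" using C(2) assms(2) by auto
    ultimately show False
      using mfqst_admissible_split_balanced[OF assms(1,3)] cardI assms(2) by force
  qed
  with degS assms(3) show ?thesis by auto
qed

end
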